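(* Let $\phi:\mathbb{R}^n\to\mathbb{R}$ be a twice continuously differentiable $\mu$-strongly convex function ($\mu>0$) which attains its minimum value $\phi^*$ at $x^*\in\mathbb{R}^n$, and assume $\nabla\phi$ is $L$-Lipschitz continuous. Fix $\alpha,\beta>0$ and $\lambda\in[0,1]$ with $\lambda\le \frac{1}{2\alpha}$. Then there exist constants $C\ge 0$ and $\kappa>0$ such that, for every $z_0\in\mathbb{R}^n$ and every $t>0$, the $\lambda$-extended speed restarted trajectory $\boldsymbol{x}_{z_0}$ starting from $z_0$ is defined on $[0,\infty)$ and satisfies $$\phi(\boldsymbol{x}_{z_0}(t))-\phi^*\le C e^{-\kappa t}\big(\phi(z_0)-\phi^*\big).$$
   Context: For $z\in\mathbb{R}^n$, $x_z\in C^2((0,\infty);\mathbb{R}^n)\cap C^1([0,\infty);\mathbb{R}^n)$ denotes the unique function with $x_z(0)=z$, $\dot x_z(0)=0$ satisfying, for all $t>0$, $$\ddot x(t)+\frac{\alpha}{t}\dot x(t)+\beta\nabla^2\phi(x(t))\dot x(t)+\nabla\phi(x(t))=0 \qquad\text{(DIN-AVD)}.$$ For $z\notin\operatorname{argmin}\phi$, $t>0$ and $\lambda\in[0,1]$ set $\varphi_{z,\lambda}(t)=\frac12\frac{d}{dt}\|\dot x_z(t)\|^2+\lambda\frac{\alpha}{t}\|\dot x_z(t)\|^2$, and define the $\lambda$-extended speed restarting time $T^\lambda(z)=\inf\{t>0:\varphi_{z,\lambda}(t)\le 0\}$. The restarted trajectory $\boldsymbol{x}_{z_0}:[0,\infty)\to\mathbb{R}^n$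 is defined inductively: $T_1=T^\lambda(z_0)$, $\boldsymbol{x}_{z_0}(t)=x_{z_0}(t)$ for $t\in[0,T_1]$, $z_1=\boldsymbol{x}_{z_0}(T_1)$; and for $k\ge1$, $T_{k+1}=T_k+T^\lambda(z_k)$, $\boldsymbol{x}_{z_0}(t)=x_{z_k}(t-T_k)$ for $t\in[T_k,T_{k+1}]$, $z_{k+1}=\boldsymbol{x}_{z_0}(T_{k+1})$ (if some $z_k$ is a minimizer, the trajectory stays constant from then on). *)

theory Defs
  imports "HOL-Analysis.Analysis"
begin

definition strongly_convex_on :: "real \<Rightarrow> 'a::real_inner set \<Rightarrow> ('a \<Rightarrow> real) \<Rightarrow> bool" where
  "strongly_convex_on \<mu> S \<phi> \<longleftrightarrow> convex_on S (\<lambda>x. \<phi> x - \<mu> / 2 * (norm x)\<^sup>2)"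

text \<open>x is a solution of (DIN-AVD) with x(0) = z, x'(0) = 0, where g is the gradient
  and H the Hessian of phi; x is C^1 on [0,inf) and C^2 on (0,inf).\<close>
definition DIN_sol ::
  "real \<Rightarrow> real \<Rightarrow> ('a::euclidean_space \<Rightarrow> 'a) \<Rightarrow> ('a \<Rightarrow> 'a \<Rightarrow>\<^sub>L 'a) \<Rightarrow> 'a \<Rightarrow> (real \<Rightarrow> 'a) \<Rightarrow> bool" where
  "DIN_sol \<alpha> \<beta> g H z x \<longleftrightarrow>
     x 0 = z \<and>
     (\<exists>x' x''.
        (\<forall>t\<ge>0. (x has_vector_derivative x' t) (at t within {0..})) \<and>
        continuous_on {0..} x' \<and> x' 0 = 0 \<and>
        (\<forall>t>0. (x' has_vector_derivative x'' t) (at t)) \<and>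
        continuous_on {0<..} x'' \<and>
        (\<forall>t>0. x'' t + (\<alpha> / t) *\<^sub>R x' t + \<beta> *\<^sub>R blinfun_apply (H (x t)) (x' t) + g (x t) = 0))"

definition restart_fun :: "(real \<Rightarrow> 'a::real_normed_vector) \<Rightarrow> real \<Rightarrow> real \<Rightarrow> real \<Rightarrow> real" where
  "restart_fun x \<alpha> lam t =
     1/2 * deriv (\<lambda>s. (norm (vector_derivative x (at s)))\<^sup>2) t
     + lam * (\<alpha> / t) * (norm (vector_derivative x (at t)))\<^sup>2"

text \<open>Restarting time T^lambda(z) as an extended real; it is +infinity if z is a minimizer
  (the trajectory then stays constant) or if the set is empty (inf of the empty set).\<close>
definition restart_time ::
  "('a \<Rightarrow> real) \<Rightarrow> ('a \<Rightarrow> real \<Rightarrow> 'a::real_normed_vector) \<Rightarrow> real \<Rightarrow> real \<Rightarrow> 'a \<Rightarrow> ereal" where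
  "restart_time \<phi> xs \<alpha> lam z =
     (if (\<forall>y. \<phi> z \<le> \<phi> y) then \<infinity>
      else Inf (ereal ` {t. t > 0 \<and> restart_fun (xs z) \<alpha> lam t \<le> 0}))"

fun restart_seq ::
  "('a \<Rightarrow> real) \<Rightarrow> ('a \<Rightarrow> real \<Rightarrow> 'a::real_normed_vector) \<Rightarrow> real \<Rightarrow> real \<Rightarrow> 'a \<Rightarrow> nat \<Rightarrow> 'a \<times> ereal" where
  "restart_seq \<phi> xs \<alpha> lam z0 0 = (z0, 0)"
| "restart_seq \<phi> xs \<alpha> lam z0 (Suc k) =
     (let (z, T) = restart_seq \<phi> xs \<alpha> lam z0 k;
          \<tau> = restart_time \<phi> xs \<alpha> lam z
      in (if \<tau> = \<infinity> then z else xs z (real_of_ereal \<tau>), T + \<tau>))"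

definition restart_point where "restart_point \<phi> xs \<alpha> lam z0 k = fst (restart_seq \<phi> xs \<alpha> lam z0 k)"
definition restart_T where "restart_T \<phi> xs \<alpha> lam z0 k = snd (restart_seq \<phi> xs \<alpha> lam z0 k)"

text \<open>Restarted trajectory: on [T_k, T_{k+1}) it equals x_{z_k}(t - T_k).
  It is meaningful at t exactly when t < T_k for some k.\<close>
definition restarted_traj ::
  "('a \<Rightarrow> real) \<Rightarrow> ('a \<Rightarrow> real \<Rightarrow> 'a::real_normed_vector) \<Rightarrow> real \<Rightarrow> real \<Rightarrow> 'a \<Rightarrow> real \<Rightarrow> 'a" where
  "restarted_traj \<phi> xs \<alpha> lam z0 t =
     (let k = (LEAST k. ereal t < restart_T \<phi> xs \<alpha> lam z0 (Suc k))
      in xs (restart_point \<phi> xs \<alpha> lam z0 k) (t - real_of_ereal (restart_T \<phi> xs \<alpha> lam z0 k)))"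

end

theory Submission
  imports Defs
begin

(* Along a solution of (DIN-AVD) the energy phi(x) + |x'|^2/2 decreases at rate at least
   beta mu |x'|^2.  For small t the solution started at z behaves like
   z - t^2/(2(1+alpha)) grad phi(z), with errors bounded by |grad phi(z)| times constants that
   depend only on mu, L, alpha, beta.  Hence the restart criterion cannot fire before a uniform
   time t_min, and by then the energy has dropped by a fixed multiple of
   |grad phi(z)|^2 >= 2 mu (phi(z) - min phi).  As long as no restart occurs, t^(2 lam alpha) |x'|^2
   is nondecreasing, so |x'|^2 decays at most like 1/t and the energy keeps falling like a
   multiple of ln t; this forces a restart before a uniform time t_max.  So every restart
   interval has length at most t_max and contracts phi - min phi by a fixed factor q < 1, which
   gives linear convergence with C = 1/q and kappa = -ln q / t_max. *)

section \<open>Strong convexity and bounds on derivatives\<close>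

lemma strongly_convex_on_imp_above_tangent:
  fixes \<phi> :: "'a::real_inner \<Rightarrow> real"
  assumes sc: "strongly_convex_on \<mu> UNIV \<phi>"
    and deriv: "(\<phi> has_derivative (\<lambda>h. d \<bullet> h)) (at x)"
  shows "\<phi> x + d \<bullet> (y - x) + \<mu> / 2 * (norm (y - x))\<^sup>2 \<le> \<phi> y"
proof -
  define \<psi> where "\<psi> x = \<phi> x - \<mu> / 2 * (norm x)\<^sup>2" for x
  define f where "f s = \<psi> (x + s *\<^sub>R (y - x))" for s :: real
  have "convex_on UNIV \<psi>"
    using sc unfolding strongly_convex_on_def \<psi>_def .
  then have f_convex: "convex_on UNIV f"
  proof (intro convex_onI)
    fix s1 s2 u :: real assume "0 < u" "u < 1" and \<psi>: "convex_on UNIV \<psi>"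
    have "f ((1 - u) *\<^sub>R s1 + u *\<^sub>R s2) = \<psi> ((1 - u) *\<^sub>R (x + s1 *\<^sub>R (y - x)) + u *\<^sub>R (x + s2 *\<^sub>R (y - x)))"
      unfolding f_def by (simp add: algebra_simps)
    also have "\<dots> \<le> (1 - u) * f s1 + u * f s2"
      unfolding f_def using convex_onD[OF \<psi>, of u] \<open>0 < u\<close> \<open>u < 1\<close> by simp
    finally show "f ((1 - u) *\<^sub>R s1 + u *\<^sub>R s2) \<le> (1 - u) * f s1 + u * f s2" .
  qed auto
  have \<psi>_deriv: "(\<psi> has_derivative (\<lambda>h. d \<bullet> h - \<mu> * (x \<bullet> h))) (at (x + 0 *\<^sub>R (y - x)))"
    unfolding \<psi>_def[abs_def] power2_norm_eq_inner
    by (auto intro!: derivative_eq_intros deriv simp: inner_commute)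
  have line_deriv: "((\<lambda>s. x + s *\<^sub>R (y - x)) has_derivative (\<lambda>s. s *\<^sub>R (y - x))) (at 0)"
    by (auto intro!: derivative_eq_intros)
  have "(f has_derivative (\<lambda>s. d \<bullet> (s *\<^sub>R (y - x)) - \<mu> * (x \<bullet> (s *\<^sub>R (y - x))))) (at 0)"
    unfolding f_def using has_derivative_compose[OF line_deriv \<psi>_deriv] .
  then have "(f has_field_derivative d \<bullet> (y - x) - \<mu> * (x \<bullet> (y - x))) (at 0)"
    unfolding has_field_derivative_def
    by (rule has_derivative_eq_rhs) (simp add: fun_eq_iff algebra_simps)
  then have "d \<bullet> (y - x) - \<mu> * (x \<bullet> (y - x)) \<le> f 1 - f 0"
    using convex_on_imp_above_tangent[OF f_convex, of 0 1] by simp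
  then show ?thesis
    by (simp add: f_def \<psi>_def power2_norm_eq_inner inner_diff_left inner_diff_right
        inner_commute algebra_simps)
qed

lemma strongly_convex_on_gradient_monotone:
  fixes \<phi> :: "'a::real_inner \<Rightarrow> real"
  assumes "strongly_convex_on \<mu> UNIV \<phi>"
    and "\<And>x. (\<phi> has_derivative (\<lambda>h. g x \<bullet> h)) (at x)"
  shows "\<mu> * (norm (y - x))\<^sup>2 \<le> (g y - g x) \<bullet> (y - x)"
proof -
  have "\<phi> x + g x \<bullet> (y - x) + \<mu> / 2 * (norm (y - x))\<^sup>2 \<le> \<phi> y"
    and "\<phi> y + g y \<bullet> (x - y) + \<mu> / 2 * (norm (x - y))\<^sup>2 \<le> \<phi> x"
    using strongly_convex_on_imp_above_tangent[OF assms] by blast+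
  then show ?thesis
    by (simp add: norm_minus_commute inner_diff_left inner_diff_right)
qed

lemma strongly_convex_on_gradient_dominance:
  fixes \<phi> :: "'a::real_inner \<Rightarrow> real"
  assumes "strongly_convex_on \<mu> UNIV \<phi>" and "\<mu> > 0"
    and "(\<phi> has_derivative (\<lambda>h. d \<bullet> h)) (at x)"
  shows "2 * \<mu> * (\<phi> x - \<phi> y) \<le> (norm d)\<^sup>2"
proof -
  have "\<phi> x + d \<bullet> (y - x) + \<mu> / 2 * (norm (y - x))\<^sup>2 \<le> \<phi> y"
    using assms(1,3) by (rule strongly_convex_on_imp_above_tangent)
  then have "2 * \<mu> * (\<phi> x - \<phi> y) \<le> 2 * \<mu> * (- (d \<bullet> (y - x)) - \<mu> / 2 * (norm (y - x))\<^sup>2)"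
    using \<open>\<mu> > 0\<close> by (intro mult_left_mono) auto
  also have "\<dots> = (norm d)\<^sup>2 - (norm (d + \<mu> *\<^sub>R (y - x)))\<^sup>2"
    unfolding power2_norm_eq_inner
    by (simp add: inner_add_left inner_add_right inner_commute algebra_simps power2_eq_square)
  also have "\<dots> \<le> (norm d)\<^sup>2"
    by simp
  finally show ?thesis .
qed

lemma DERIV_le_of_linear_bound_right:
  assumes "(q has_real_derivative q') (at 0)"
    and "\<And>s. 0 < s \<Longrightarrow> q s \<le> c * s" and "q 0 = 0"
  shows "q' \<le> c"
proof (rule tendsto_upperbound)
  show "((\<lambda>s. (q s - q 0) / (s - 0)) \<longlongrightarrow> q') (at_right 0)"
    using assms(1) unfolding has_field_derivative_iff by (rule tendsto_mono[OF at_le, rotated]) simp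
  show "\<forall>\<^sub>F s in at_right 0. (q s - q 0) / (s - 0) \<le> c"
    using assms(2,3)
    by (auto simp: eventually_at_right_less divide_le_eq intro: eventually_mono[OF eventually_at_right_less])
qed simp

lemma has_derivative_inner_along_line:
  assumes "(g has_derivative D) (at x)"
  shows "((\<lambda>s. (g (x + s *\<^sub>R h) - g x) \<bullet> w) has_real_derivative D h \<bullet> w) (at 0)"
proof -
  have "((\<lambda>s. x + s *\<^sub>R h) has_derivative (\<lambda>s. s *\<^sub>R h)) (at 0)"
    by (auto intro!: derivative_eq_intros)
  from has_derivative_compose[OF this] assms
  have "((\<lambda>s. g (x + s *\<^sub>R h)) has_derivative (\<lambda>s. D (s *\<^sub>R h))) (at 0)"
    by simp
  then have "((\<lambda>s. (g (x + s *\<^sub>R h) - g x) \<bullet> w) has_derivative (\<lambda>s. D (s *\<^sub>R h) \<bullet> w)) (at 0)"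
    by (auto intro!: derivative_eq_intros)
  moreover have "D (s *\<^sub>R h) \<bullet> w = (D h \<bullet> w) * s" for s
    using linear_cmul[OF has_derivative_linear[OF assms]] by simp
  ultimately show ?thesis
    by (simp add: has_field_derivative_def)
qed

lemma strongly_monotone_derivative_lower_bound:
  fixes g :: "'a::real_inner \<Rightarrow> 'a"
  assumes "(g has_derivative D) (at x)"
    and "\<And>y. \<mu> * (norm (y - x))\<^sup>2 \<le> (g y - g x) \<bullet> (y - x)"
  shows "\<mu> * (norm h)\<^sup>2 \<le> D h \<bullet> h"
proof -
  have "((\<lambda>s. - ((g (x + s *\<^sub>R h) - g x) \<bullet> h)) has_real_derivative - (D h \<bullet> h)) (at 0)"
    using has_derivative_inner_along_line[OF assms(1)] by (rule DERIV_minus)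
  moreover have "- ((g (x + s *\<^sub>R h) - g x) \<bullet> h) \<le> - (\<mu> * (norm h)\<^sup>2) * s" if "0 < s" for s
  proof -
    have "\<mu> * (norm (s *\<^sub>R h))\<^sup>2 \<le> (g (x + s *\<^sub>R h) - g x) \<bullet> (s *\<^sub>R h)"
      using assms(2)[of "x + s *\<^sub>R h"] by simp
    then have "s * (\<mu> * (norm h)\<^sup>2 * s) \<le> s * ((g (x + s *\<^sub>R h) - g x) \<bullet> h)"
      using that by (simp add: power2_eq_square mult_ac)
    then show ?thesis
      using that by simp
  qed
  ultimately have "- (D h \<bullet> h) \<le> - (\<mu> * (norm h)\<^sup>2)"
    by (rule DERIV_le_of_linear_bound_right) auto
  then show ?thesis
    by simp
qed

lemma lipschitz_derivative_norm_le:
  fixes g :: "'a::real_normed_vector \<Rightarrow> 'b::real_inner"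
  assumes "L-lipschitz_on UNIV g" and "(g has_derivative D) (at x)"
  shows "norm (D h) \<le> L * norm h"
proof -
  have "D h \<bullet> D h \<le> L * norm h * norm (D h)"
    using has_derivative_inner_along_line[OF assms(2), of h "D h"]
  proof (rule DERIV_le_of_linear_bound_right)
    fix s :: real assume "0 < s"
    have "(g (x + s *\<^sub>R h) - g x) \<bullet> D h \<le> norm (g (x + s *\<^sub>R h) - g x) * norm (D h)"
      by (rule norm_cauchy_schwarz)
    also have "\<dots> \<le> L * norm (s *\<^sub>R h) * norm (D h)"
      using lipschitz_on_normD[OF assms(1), of "x + s *\<^sub>R h" x] by (simp add: mult_right_mono)
    finally show "(g (x + s *\<^sub>R h) - g x) \<bullet> D h \<le> L * norm h * norm (D h) * s"
      using \<open>0 < s\<close> by (simp add: mult_ac)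
  qed simp
  then have "norm (D h) * norm (D h) \<le> (L * norm h) * norm (D h)"
    by (simp add: dot_square_norm power2_eq_square)
  moreover have "0 \<le> L * norm h"
    using lipschitz_on_nonneg[OF assms(1)] by simp
  ultimately show ?thesis
    by (cases "D h = 0") (auto intro: mult_right_le_imp_le)
qed

lemma DERIV_le_imp_diff_le:
  fixes f F :: "real \<Rightarrow> real"
  assumes "s \<le> t" and "continuous_on {s..t} f" and "continuous_on {s..t} F"
    and "\<And>r. s < r \<Longrightarrow> r < t \<Longrightarrow> (f has_real_derivative f' r) (at r)"
    and "\<And>r. s < r \<Longrightarrow> r < t \<Longrightarrow> (F has_real_derivative F' r) (at r)"
    and "\<And>r. s < r \<Longrightarrow> r < t \<Longrightarrow> f' r \<le> F' r"
  shows "f t - f s \<le> F t - F s"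
proof -
  have "f t - F t \<le> f s - F s"
  proof (rule DERIV_nonpos_imp_decreasing_open[OF \<open>s \<le> t\<close>])
    fix r assume "s < r" "r < t"
    then have "((\<lambda>r. f r - F r) has_real_derivative f' r - F' r) (at r)"
      using assms(4,5) by (intro DERIV_diff)
    then show "\<exists>y. ((\<lambda>r. f r - F r) has_real_derivative y) (at r) \<and> y \<le> 0"
      using assms(6) \<open>s < r\<close> \<open>r < t\<close> by auto
  qed (intro continuous_on_diff assms(2,3))
  then show ?thesis
    by simp
qed

lemma norm_le_of_derivative_powr_bound:
  fixes f :: "real \<Rightarrow> 'b::real_normed_vector"
  assumes "0 \<le> t" and "-1 < p" and "continuous_on {0..t} f" and "f 0 = 0"
    and "\<And>s. 0 < s \<Longrightarrow> s < t \<Longrightarrow> (f has_vector_derivative f' s) (at s)"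
    and "\<And>s. 0 < s \<Longrightarrow> s < t \<Longrightarrow> norm (f' s) \<le> C * s powr p"
  shows "norm (f t) \<le> C * t powr (p + 1) / (p + 1)"
proof (cases "t = 0")
  case False
  define F where "F s = C * s powr (p + 1) / (p + 1)" for s
  have F_cont: "continuous_on {0..t} F"
    unfolding F_def using \<open>-1 < p\<close> by (intro continuous_intros continuous_on_powr') auto
  have F_deriv: "(F has_vector_derivative C * s powr p) (at s)" if "0 < s" for s
  proof -
    have "((\<lambda>s. s powr (p + 1)) has_real_derivative (p + 1) * s powr (p + 1 - 1)) (at s)"
      using that by (rule has_real_derivative_powr)
    then have "(F has_real_derivative C * ((p + 1) * s powr (p + 1 - 1)) / (p + 1)) (at s)"
      unfolding F_def using that by (auto intro!: derivative_eq_intros)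
    then show ?thesis
      using \<open>-1 < p\<close> by (simp add: has_real_derivative_iff_has_vector_derivative)
  qed
  have "0 < t"
    using assms(1) False by simp
  then have "norm (f t - f 0) \<le> F t - F 0"
    by (rule differentiable_bound_general[OF _ assms(3) F_cont assms(5) F_deriv assms(6)])
  then show ?thesis
    using assms(2,4) by (simp add: F_def)
qed (use assms(4) in simp)

lemma power_le_exp_decay:
  fixes q T t :: real
  assumes "0 < q" and "q < 1" and "0 < T" and "t \<le> (real k + 1) * T"
  shows "q ^ k \<le> 1 / q * exp (- (- ln q / T) * t)"
proof -
  have "q * q ^ k = exp ((real k + 1) * ln q)"
    using exp_of_nat_mult[of "Suc k" "ln q"] assms(1) by (simp add: add.commute)
  also have "\<dots> \<le> exp (t / T * ln q)"
    using assms by (intro exp_mono mult_right_mono_neg) (auto simp: divide_le_eq)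
  finally show ?thesis
    using assms(1) by (simp add: field_simps)
qed

section \<open>Energy decay along a trajectory\<close>

locale din_avd =
  fixes \<phi> :: "'a::euclidean_space \<Rightarrow> real"
    and g :: "'a \<Rightarrow> 'a"
    and H :: "'a \<Rightarrow> 'a \<Rightarrow>\<^sub>L 'a"
    and \<mu> L \<alpha> \<beta> lam :: real and xstar :: 'a
  assumes grad: "\<And>x. (\<phi> has_derivative (\<lambda>h. g x \<bullet> h)) (at x)"
    and hess: "\<And>x. (g has_derivative blinfun_apply (H x)) (at x)"
    and mu_pos: "\<mu> > 0"
    and strongly_convex: "strongly_convex_on \<mu> UNIV \<phi>"
    and minimizer: "\<And>x. \<phi> xstar \<le> \<phi> x"
    and lipschitz: "L-lipschitz_on UNIV g"
    and alpha_pos: "\<alpha> > 0" and beta_pos: "\<beta> > 0"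
    and lam_nonneg: "0 \<le> lam" and lam_le: "lam \<le> 1 / (2 * \<alpha>)"
begin

lemma phi_continuous: "continuous_on S \<phi>"
  using grad by (intro continuous_at_imp_continuous_on) (blast intro: has_derivative_continuous)

lemma gradient_dominance: "2 * \<mu> * (\<phi> x - \<phi> xstar) \<le> (norm (g x))\<^sup>2"
  using strongly_convex_on_gradient_dominance[OF strongly_convex mu_pos grad] .

lemma hessian_lower_bound: "\<mu> * (norm h)\<^sup>2 \<le> H x h \<bullet> h"
  using strongly_monotone_derivative_lower_bound[OF hess
      strongly_convex_on_gradient_monotone[OF strongly_convex grad]] .

lemma hessian_norm_le: "norm (H x h) \<le> L * norm h"
  using lipschitz_derivative_norm_le[OF lipschitz hess] .

lemma L_nonneg: "0 \<le> L"
  using lipschitz_on_nonneg[OF lipschitz] .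

definition speed_const :: real where
  "speed_const = 1 + (\<beta> + 1) * L / sqrt \<mu>"

definition drift_const :: real where
  "drift_const = (\<beta> + 1) * L * speed_const"

definition error_const :: real where
  "error_const = drift_const + \<alpha> * drift_const\<^sup>2 + (\<beta> + 1) * L * speed_const\<^sup>2"

definition t_min :: real where
  "t_min = 1 / (2 * (1 + \<alpha>)\<^sup>2 * (error_const + 1))"

(* Chosen so that, without a restart on [t_min, t_max], the energy would drop there by
   |g z|^2 / mu >= 2 (phi z - phi xstar), which is impossible (energy_drop_without_restart). *)
definition t_max :: real where
  "t_max = t_min * exp (4 * (1 + \<alpha>)\<^sup>2 / (\<beta> * \<mu>\<^sup>2 * t_min ^ 3))"

(* The maximum with 1/2 only keeps the rate positive. *)
definition decay_rate :: real where
  "decay_rate = max (1 / 2) (1 - \<beta> * \<mu>\<^sup>2 * t_min ^ 3 / (6 * (1 + \<alpha>)\<^sup>2))"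

lemma speed_const_ge_1: "1 \<le> speed_const"
  using beta_pos L_nonneg mu_pos by (simp add: speed_const_def)

lemma drift_const_nonneg: "0 \<le> drift_const"
  using beta_pos L_nonneg speed_const_ge_1 by (simp add: drift_const_def)

lemma drift_const_le_error_const: "drift_const \<le> error_const"
  using alpha_pos beta_pos L_nonneg by (simp add: error_const_def)

lemma error_const_nonneg: "0 \<le> error_const"
  using drift_const_nonneg drift_const_le_error_const by simp

lemma t_min_pos: "0 < t_min"
  using alpha_pos error_const_nonneg by (simp add: t_min_def)

lemma t_min_le_1: "t_min \<le> 1"
proof -
  define P where "P = 2 * (1 + \<alpha>)\<^sup>2 * (error_const + 1)"
  have "1 \<le> (1 + \<alpha>)\<^sup>2"
    using alpha_pos by (simp add: one_le_power)
  moreover have "(1 + \<alpha>)\<^sup>2 * 1 \<le> (1 + \<alpha>)\<^sup>2 * (error_const + 1)"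
    using error_const_nonneg by (intro mult_left_mono) auto
  ultimately have "1 \<le> P"
    unfolding P_def by linarith
  then show ?thesis
    by (simp add: t_min_def flip: P_def)
qed

lemma error_const_mult_le:
  assumes "0 \<le> t" and "t \<le> t_min"
  shows "error_const * t \<le> 1 / (2 * (1 + \<alpha>)\<^sup>2)"
proof -
  have "error_const * t \<le> t_min * error_const"
    using mult_left_mono[OF assms(2) error_const_nonneg] by (simp add: mult.commute)
  also have "\<dots> = 1 / (2 * (1 + \<alpha>)\<^sup>2) * (error_const / (error_const + 1))"
    by (simp add: t_min_def)
  also have "\<dots> \<le> 1 / (2 * (1 + \<alpha>)\<^sup>2) * 1"
    using error_const_nonneg by (intro mult_left_mono) auto
  finally show ?thesis
    by simp
qed

lemma drift_const_mult_le:
  assumes "0 \<le> t" and "t \<le> t_min"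
  shows "drift_const * t \<le> 1 / (2 * (1 + \<alpha>))"
proof -
  have "drift_const * t \<le> error_const * t"
    using drift_const_le_error_const assms(1) by (rule mult_right_mono)
  also have "\<dots> \<le> 1 / (2 * (1 + \<alpha>)\<^sup>2)"
    using assms by (rule error_const_mult_le)
  also have "\<dots> \<le> 1 / (2 * (1 + \<alpha>))"
  proof -
    have "(1 + \<alpha>) * 1 \<le> (1 + \<alpha>) * (1 + \<alpha>)"
      using alpha_pos by (intro mult_left_mono) auto
    then have "2 * (1 + \<alpha>) \<le> 2 * (1 + \<alpha>)\<^sup>2"
      by (simp add: power2_eq_square)
    then show ?thesis
      by (rule divide_left_mono) (use alpha_pos in auto)
  qed
  finally show ?thesis .
qed

lemma t_min_less_t_max: "t_min < t_max"
  using t_min_pos alpha_pos beta_pos mu_pos by (simp add: t_max_def)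

lemma decay_rate_pos: "0 < decay_rate"
  by (simp add: decay_rate_def)

lemma decay_rate_less_1: "decay_rate < 1"
  using t_min_pos alpha_pos beta_pos mu_pos by (simp add: decay_rate_def)

end

locale din_trajectory = din_avd +
  fixes z :: "'a::euclidean_space" and x v a :: "real \<Rightarrow> 'a"
  assumes x_0: "x 0 = z"
    and x_deriv: "\<And>t. 0 \<le> t \<Longrightarrow> (x has_vector_derivative v t) (at t within {0..})"
    and v_cont: "continuous_on {0..} v" and v_0: "v 0 = 0"
    and v_deriv: "\<And>t. 0 < t \<Longrightarrow> (v has_vector_derivative a t) (at t)"
    and din_eq: "\<And>t. 0 < t \<Longrightarrow> a t + (\<alpha> / t) *\<^sub>R v t + \<beta> *\<^sub>R H (x t) (v t) + g (x t) = 0"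

lemma (in din_avd) DIN_sol_imp_trajectory:
  assumes "DIN_sol \<alpha> \<beta> g H z x"
  obtains v a where "din_trajectory \<phi> g H \<mu> L \<alpha> \<beta> lam xstar z x v a"
  using assms din_avd_axioms
  unfolding DIN_sol_def din_trajectory_def din_trajectory_axioms_def by blast

context din_trajectory
begin

lemma x_has_vector_derivative:
  assumes "0 < t"
  shows "(x has_vector_derivative v t) (at t)"
proof -
  have "(x has_vector_derivative v t) (at t within {0<..})"
    using x_deriv[of t] assms by (auto intro: has_vector_derivative_within_subset)
  moreover have "at t within {0<..} = at t"
    using assms by (intro at_within_open) auto
  ultimately show ?thesis
    by simp
qed

lemma x_continuous: "continuous_on {0..} x"
  unfolding continuous_on_eq_continuous_within
  by (auto intro: has_vector_derivative_continuous[OF x_deriv])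

lemma acceleration_eq: "0 < t \<Longrightarrow> a t = - (\<alpha> / t) *\<^sub>R v t - \<beta> *\<^sub>R H (x t) (v t) - g (x t)"
  using din_eq[of t] by (simp add: algebra_simps eq_neg_iff_add_eq_0 flip: minus_add_distrib)

definition energy :: "real \<Rightarrow> real" where
  "energy t = \<phi> (x t) + (norm (v t))\<^sup>2 / 2"

lemma energy_continuous: "continuous_on {0..} energy"
  unfolding energy_def[abs_def]
  by (intro continuous_intros continuous_on_compose2[OF phi_continuous x_continuous] v_cont) auto

lemma norm_velocity_sq_has_real_derivative:
  "0 < t \<Longrightarrow> ((\<lambda>s. (norm (v s))\<^sup>2) has_real_derivative 2 * (v t \<bullet> a t)) (at t)"
  using v_deriv[of t] unfolding power2_norm_eq_inner has_vector_derivative_def has_field_derivative_def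
  by (auto intro!: derivative_eq_intros simp: inner_commute algebra_simps)

lemma energy_has_real_derivative:
  assumes "0 < t"
  shows "(energy has_real_derivative - (\<alpha> / t) * (norm (v t))\<^sup>2 - \<beta> * (H (x t) (v t) \<bullet> v t)) (at t)"
proof -
  have "((\<lambda>s. \<phi> (x s)) has_real_derivative g (x t) \<bullet> v t) (at t)"
    using has_derivative_compose[OF
        x_has_vector_derivative[OF assms, unfolded has_vector_derivative_def] grad]
    by (simp add: has_field_derivative_def mult.commute[of _ "g (x t) \<bullet> v t"])
  then have "(energy has_real_derivative g (x t) \<bullet> v t + 2 * (v t \<bullet> a t) / 2) (at t)"
    unfolding energy_def[abs_def]
    by (intro DERIV_add DERIV_cdivide norm_velocity_sq_has_real_derivative assms)
  also have "g (x t) \<bullet> v t + 2 * (v t \<bullet> a t) / 2 = - (\<alpha> / t) * (norm (v t))\<^sup>2 - \<beta> * (H (x t) (v t) \<bullet> v t)"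
    unfolding acceleration_eq[OF assms]
    by (simp add: inner_diff_right inner_add_right inner_commute power2_norm_eq_inner field_simps)
  finally show ?thesis .
qed

lemma energy_rate_le:
  assumes "0 < t"
  shows "- (\<alpha> / t) * (norm (v t))\<^sup>2 - \<beta> * (H (x t) (v t) \<bullet> v t) \<le> - \<beta> * \<mu> * (norm (v t))\<^sup>2"
proof -
  have "0 \<le> (\<alpha> / t) * (norm (v t))\<^sup>2"
    using alpha_pos assms by simp
  moreover have "\<beta> * (\<mu> * (norm (v t))\<^sup>2) \<le> \<beta> * (H (x t) (v t) \<bullet> v t)"
    using hessian_lower_bound beta_pos by (simp add: mult_left_mono)
  ultimately show ?thesis
    by (simp add: algebra_simps)
qed

lemma energy_diff_le:
  assumes "0 \<le> s" "s \<le> t" and "continuous_on {s..t} F"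
    and "\<And>r. s < r \<Longrightarrow> r < t \<Longrightarrow> (F has_real_derivative F' r) (at r)"
    and "\<And>r. s < r \<Longrightarrow> r < t \<Longrightarrow> - \<beta> * \<mu> * (norm (v r))\<^sup>2 \<le> F' r"
  shows "energy t - energy s \<le> F t - F s"
proof (rule DERIV_le_imp_diff_le[OF assms(2) _ assms(3) _ assms(4)])
  show "continuous_on {s..t} energy"
    using assms(1) by (intro continuous_on_subset[OF energy_continuous]) auto
  fix r assume "s < r" "r < t"
  then have "0 < r"
    using assms(1) by simp
  then show "(energy has_real_derivative - (\<alpha> / r) * (norm (v r))\<^sup>2 - \<beta> * (H (x r) (v r) \<bullet> v r)) (at r)"
    and "- (\<alpha> / r) * (norm (v r))\<^sup>2 - \<beta> * (H (x r) (v r) \<bullet> v r) \<le> F' r"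
    using energy_has_real_derivative energy_rate_le[of r] assms(5)[OF \<open>s < r\<close> \<open>r < t\<close>] by auto
qed

lemma energy_antimono: "0 \<le> s \<Longrightarrow> s \<le> t \<Longrightarrow> energy t \<le> energy s"
  using energy_diff_le[where F = "\<lambda>_. 0" and F' = "\<lambda>_. 0"] beta_pos mu_pos by force

lemma energy_0: "energy 0 = \<phi> z"
  by (simp add: energy_def x_0 v_0)

lemma phi_le_energy: "\<phi> (x t) \<le> energy t"
  by (simp add: energy_def)

lemma phi_le_initial: "0 \<le> t \<Longrightarrow> \<phi> (x t) \<le> \<phi> z"
  using energy_antimono[of 0 t] energy_0 phi_le_energy[of t] by linarith

lemma speed_sq_le: "0 \<le> t \<Longrightarrow> (norm (v t))\<^sup>2 \<le> 2 * (\<phi> z - \<phi> xstar)"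
  using energy_antimono[of 0 t] energy_0 minimizer[of "x t"] by (simp add: energy_def)

lemma restart_fun_eq:
  assumes "0 < t"
  shows "restart_fun x \<alpha> lam t = v t \<bullet> a t + lam * (\<alpha> / t) * (norm (v t))\<^sup>2"
proof -
  have v_eq: "vector_derivative x (at s) = v s" if "0 < s" for s
    using vector_derivative_at[OF x_has_vector_derivative[OF that]] .
  have "((\<lambda>s. (norm (vector_derivative x (at s)))\<^sup>2) has_real_derivative 2 * (v t \<bullet> a t)) (at t)"
    using norm_velocity_sq_has_real_derivative[OF assms]
    by (rule has_field_derivative_transform_within_open[of _ _ _ "{0<..}"]) (use assms v_eq in auto)
  then show ?thesis
    unfolding restart_fun_def using DERIV_imp_deriv v_eq[OF assms] by fastforce
qed

lemma weighted_speed_has_real_derivative: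
  assumes "0 < t"
  shows "((\<lambda>s. s powr (2 * lam * \<alpha>) * (norm (v s))\<^sup>2) has_real_derivative
           2 * t powr (2 * lam * \<alpha>) * restart_fun x \<alpha> lam t) (at t)"
proof -
  have "((\<lambda>s. s powr (2 * lam * \<alpha>) * (norm (v s))\<^sup>2) has_real_derivative
          2 * lam * \<alpha> * t powr (2 * lam * \<alpha> - 1) * (norm (v t))\<^sup>2
          + 2 * (v t \<bullet> a t) * t powr (2 * lam * \<alpha>)) (at t)"
    using has_real_derivative_powr[OF assms, of "2 * lam * \<alpha>"]
      norm_velocity_sq_has_real_derivative[OF assms]
    by (rule DERIV_mult)
  then show ?thesis
    using assms by (simp add: restart_fun_eq powr_diff field_simps)
qed

end

section \<open>Short-time behaviour of a trajectory\<close>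

context din_trajectory
begin

lemma speed_le:
  assumes "0 \<le> t"
  shows "norm (v t) \<le> norm (g z) / sqrt \<mu>"
proof -
  have "\<mu> * (norm (v t))\<^sup>2 \<le> \<mu> * (2 * (\<phi> z - \<phi> xstar))"
    using speed_sq_le[OF assms] mu_pos by (intro mult_left_mono) auto
  also have "\<dots> \<le> (norm (g z))\<^sup>2"
    using gradient_dominance[of z] by (simp add: algebra_simps)
  finally have "(norm (v t))\<^sup>2 \<le> (norm (g z) / sqrt \<mu>)\<^sup>2"
    using mu_pos by (simp add: power_divide field_simps)
  then show ?thesis
    by (rule power2_le_imp_le) (use mu_pos in simp)
qed

lemma dist_initial_le_of_speed_le:
  assumes "0 \<le> t" and "-1 < p" and "\<And>s. 0 < s \<Longrightarrow> s < t \<Longrightarrow> norm (v s) \<le> C * s powr p"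
  shows "norm (x t - z) \<le> C * t powr (p + 1) / (p + 1)"
  using assms(1,2)
proof (rule norm_le_of_derivative_powr_bound[where f = "\<lambda>s. x s - z" and f' = v])
  show "continuous_on {0..t} (\<lambda>s. x s - z)"
    by (intro continuous_intros continuous_on_subset[OF x_continuous]) auto
  show "((\<lambda>s. x s - z) has_vector_derivative v s) (at s)" if "0 < s" for s
    using x_has_vector_derivative[OF that] by (auto intro!: derivative_eq_intros)
qed (use x_0 assms(3) in auto)

lemma dist_initial_le:
  assumes "0 \<le> t"
  shows "norm (x t - z) \<le> norm (g z) / sqrt \<mu> * t"
  using dist_initial_le_of_speed_le[OF assms, of 0 "norm (g z) / sqrt \<mu>"] speed_le assms by simp

lemma forcing_le:
  assumes "0 \<le> s" and "s \<le> 1"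
  shows "norm (\<beta> *\<^sub>R H (x s) (v s) + g (x s)) \<le> norm (g z) * speed_const"
proof -
  have H_le: "norm (H (x s) (v s)) \<le> L * (norm (g z) / sqrt \<mu>)"
    using hessian_norm_le[of "x s" "v s"] speed_le[OF assms(1)] L_nonneg
    by (meson mult_left_mono order_trans)
  have "norm (\<beta> *\<^sub>R H (x s) (v s)) \<le> \<beta> * (L * (norm (g z) / sqrt \<mu>))"
    using mult_left_mono[OF H_le less_imp_le[OF beta_pos]] beta_pos by simp
  moreover have "norm (g (x s) - g z) \<le> L * (norm (g z) / sqrt \<mu>)"
  proof -
    have "norm (g (x s) - g z) \<le> L * norm (x s - z)"
      using lipschitz by (rule lipschitz_on_normD) auto
    also have "\<dots> \<le> L * (norm (g z) / sqrt \<mu> * s)"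
      using dist_initial_le[OF assms(1)] L_nonneg by (rule mult_left_mono)
    also have "\<dots> \<le> L * (norm (g z) / sqrt \<mu>)"
      using assms L_nonneg mu_pos by (intro mult_left_mono mult_left_le) auto
    finally show ?thesis .
  qed
  ultimately have "norm (\<beta> *\<^sub>R H (x s) (v s)) + norm (g (x s) - g z) + norm (g z)
      \<le> \<beta> * (L * (norm (g z) / sqrt \<mu>)) + L * (norm (g z) / sqrt \<mu>) + norm (g z)"
    by simp
  also have "\<dots> = norm (g z) * speed_const"
    by (simp add: speed_const_def algebra_simps add_divide_distrib)
  finally show ?thesis
    using norm_triangle_ineq[of "\<beta> *\<^sub>R H (x s) (v s)" "g (x s)"] norm_triangle_sub[of "g (x s)" "g z"]
    by linarith
qed

lemma weighted_velocity_continuous: "continuous_on {0..t} (\<lambda>s. s powr \<alpha> *\<^sub>R v s)"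
  using alpha_pos
  by (intro continuous_intros continuous_on_powr' continuous_on_subset[OF v_cont]) auto

(* The weight t powr alpha absorbs the singular friction term (alpha / t) v. *)
lemma weighted_velocity_has_vector_derivative:
  assumes "0 < t"
  shows "((\<lambda>s. s powr \<alpha> *\<^sub>R v s) has_vector_derivative
           - (t powr \<alpha>) *\<^sub>R (\<beta> *\<^sub>R H (x t) (v t) + g (x t))) (at t)"
proof -
  have "((\<lambda>s. s powr \<alpha> *\<^sub>R v s) has_vector_derivative
          t powr \<alpha> *\<^sub>R a t + (\<alpha> * t powr (\<alpha> - 1)) *\<^sub>R v t) (at t)"
    using has_real_derivative_powr[OF assms] v_deriv[OF assms] by (rule has_vector_derivative_scaleR)
  moreover have "\<alpha> * t powr (\<alpha> - 1) = t powr \<alpha> * (\<alpha> / t)"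
    using assms by (simp add: powr_diff)
  ultimately show ?thesis
    by (simp add: acceleration_eq[OF assms] algebra_simps)
qed

lemma speed_le_linear:
  assumes "0 \<le> t" and "t \<le> 1"
  shows "norm (v t) \<le> norm (g z) * speed_const * t"
proof (cases "t = 0")
  case False
  then have "0 < t"
    using assms(1) by simp
  have "norm (t powr \<alpha> *\<^sub>R v t) \<le> norm (g z) * speed_const * t powr (\<alpha> + 1) / (\<alpha> + 1)"
    using assms(1) _ weighted_velocity_continuous
  proof (rule norm_le_of_derivative_powr_bound)
    fix s :: real assume "0 < s" "s < t"
    then show "norm (- (s powr \<alpha>) *\<^sub>R (\<beta> *\<^sub>R H (x s) (v s) + g (x s))) \<le> norm (g z) * speed_const * s powr \<alpha>"
      using forcing_le[of s] assms(2) by (simp add: mult_left_mono mult.commute)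
  qed (use alpha_pos weighted_velocity_has_vector_derivative in auto)
  also have "\<dots> \<le> norm (g z) * speed_const * t powr (\<alpha> + 1) / 1"
    using alpha_pos speed_const_ge_1 by (intro frac_le) auto
  finally have "t powr \<alpha> * norm (v t) \<le> t powr \<alpha> * (norm (g z) * speed_const * t)"
    using \<open>0 < t\<close> by (simp add: powr_add mult_ac)
  then show ?thesis
    using \<open>0 < t\<close> by simp
qed (simp add: v_0)

lemma dist_initial_le_quadratic:
  assumes "0 \<le> t" and "t \<le> 1"
  shows "norm (x t - z) \<le> norm (g z) * speed_const * t\<^sup>2 / 2"
  using dist_initial_le_of_speed_le[OF assms(1), of 1 "norm (g z) * speed_const"] speed_le_linear assms
  by (simp add: power2_eq_square)

lemma forcing_deviation_le:
  assumes "0 \<le> s" and "s \<le> 1"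
  shows "norm (\<beta> *\<^sub>R H (x s) (v s) + (g (x s) - g z)) \<le> norm (g z) * drift_const * s"
proof -
  have "norm (H (x s) (v s)) \<le> L * (norm (g z) * speed_const * s)"
    using hessian_norm_le[of "x s" "v s"] speed_le_linear[OF assms] L_nonneg
    by (meson mult_left_mono order_trans)
  then have "norm (\<beta> *\<^sub>R H (x s) (v s)) \<le> \<beta> * (L * (norm (g z) * speed_const * s))"
    using mult_left_mono[OF _ less_imp_le[OF beta_pos]] beta_pos by simp
  moreover have "norm (g (x s) - g z) \<le> L * (norm (g z) * speed_const * s)"
  proof -
    have "norm (g (x s) - g z) \<le> L * norm (x s - z)"
      using lipschitz by (rule lipschitz_on_normD) auto
    also have "\<dots> \<le> L * (norm (g z) * speed_const * s\<^sup>2 / 2)"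
      using dist_initial_le_quadratic[OF assms] L_nonneg by (rule mult_left_mono)
    also have "\<dots> \<le> L * (norm (g z) * speed_const * s)"
    proof -
      have "s * s \<le> 2 * s"
        using assms by (intro mult_right_mono) auto
      then have "norm (g z) * speed_const * (s * s) \<le> norm (g z) * speed_const * (2 * s)"
        using speed_const_ge_1 by (intro mult_left_mono) auto
      then show ?thesis
        using L_nonneg by (intro mult_left_mono) (auto simp: power2_eq_square)
    qed
    finally show ?thesis .
  qed
  ultimately show ?thesis
    using norm_triangle_ineq[of "\<beta> *\<^sub>R H (x s) (v s)" "g (x s) - g z"]
    by (simp add: drift_const_def algebra_simps)
qed

definition velocity_deviation :: "real \<Rightarrow> 'a" where
  "velocity_deviation t = v t + (t / (1 + \<alpha>)) *\<^sub>R g z"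

lemma weighted_velocity_deviation_has_vector_derivative:
  assumes "0 < t"
  shows "((\<lambda>s. s powr \<alpha> *\<^sub>R v s + (s powr (\<alpha> + 1) / (\<alpha> + 1)) *\<^sub>R g z) has_vector_derivative
           - (t powr \<alpha>) *\<^sub>R (\<beta> *\<^sub>R H (x t) (v t) + (g (x t) - g z))) (at t)"
proof -
  have "((\<lambda>s. s powr (\<alpha> + 1) / (\<alpha> + 1)) has_real_derivative t powr \<alpha>) (at t)"
    using has_real_derivative_powr[OF assms, of "\<alpha> + 1"] alpha_pos assms
    by (auto intro!: derivative_eq_intros)
  from has_vector_derivative_scaleR[OF this has_vector_derivative_const[of "g z"]]
  have "((\<lambda>s. (s powr (\<alpha> + 1) / (\<alpha> + 1)) *\<^sub>R g z) has_vector_derivative t powr \<alpha> *\<^sub>R g z) (at t)"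
    by simp
  from has_vector_derivative_add[OF weighted_velocity_has_vector_derivative[OF assms] this]
  show ?thesis
    by (simp add: algebra_simps)
qed

lemma velocity_deviation_le:
  assumes "0 \<le> t" and "t \<le> 1"
  shows "norm (velocity_deviation t) \<le> norm (g z) * drift_const * t\<^sup>2"
proof (cases "t = 0")
  case False
  then have "0 < t"
    using assms(1) by simp
  define f where "f s = s powr \<alpha> *\<^sub>R v s + (s powr (\<alpha> + 1) / (\<alpha> + 1)) *\<^sub>R g z" for s
  have "norm (f t) \<le> norm (g z) * drift_const * t powr (\<alpha> + 1 + 1) / (\<alpha> + 1 + 1)"
    using assms(1)
  proof (rule norm_le_of_derivative_powr_bound)
    show "continuous_on {0..t} f"
      unfolding f_def using alpha_pos
      by (intro continuous_intros continuous_on_powr' weighted_velocity_continuous) auto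
    show "(f has_vector_derivative - (s powr \<alpha>) *\<^sub>R (\<beta> *\<^sub>R H (x s) (v s) + (g (x s) - g z))) (at s)"
      if "0 < s" for s
      unfolding f_def[abs_def] using that by (rule weighted_velocity_deviation_has_vector_derivative)
    fix s :: real assume "0 < s" "s < t"
    then show "norm (- (s powr \<alpha>) *\<^sub>R (\<beta> *\<^sub>R H (x s) (v s) + (g (x s) - g z)))
        \<le> norm (g z) * drift_const * s powr (\<alpha> + 1)"
      using forcing_deviation_le[of s] assms(2) by (simp add: powr_add mult_left_mono mult_ac)
  qed (use alpha_pos in \<open>auto simp: f_def\<close>)
  also have "\<dots> \<le> norm (g z) * drift_const * t powr (\<alpha> + 1 + 1) / 1"
    using alpha_pos drift_const_nonneg by (intro frac_le) auto
  also have "f t = t powr \<alpha> *\<^sub>R velocity_deviation t"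
    using \<open>0 < t\<close> by (simp add: f_def velocity_deviation_def powr_add algebra_simps)
  finally have "t powr \<alpha> * norm (velocity_deviation t) \<le> t powr \<alpha> * (norm (g z) * drift_const * t\<^sup>2)"
    using \<open>0 < t\<close> by (simp add: powr_add power2_eq_square mult_ac)
  then show ?thesis
    using \<open>0 < t\<close> by simp
qed (simp add: velocity_deviation_def v_0)

lemma inner_velocity_acceleration_eq:
  assumes "0 < t"
  shows "v t \<bullet> a t = t * (1 / (1 + \<alpha>))\<^sup>2 * (norm (g z))\<^sup>2
      + (2 * \<alpha> * (1 / (1 + \<alpha>)) - 1) * (velocity_deviation t \<bullet> g z)
      - (\<alpha> / t) * (velocity_deviation t \<bullet> velocity_deviation t)
      - \<beta> * (H (x t) (v t) \<bullet> v t) - (g (x t) - g z) \<bullet> v t"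
proof -
  define b where "b = 1 / (1 + \<alpha>)"
  define G where "G = norm (g z)"
  define r where "r = velocity_deviation t"
  have r_eq: "r = v t + (t * b) *\<^sub>R g z"
    by (simp add: r_def velocity_deviation_def b_def)
  have g_sq: "g z \<bullet> g z = G\<^sup>2"
    by (simp add: G_def power2_norm_eq_inner)
  have "v t \<bullet> a t = - (\<alpha> / t) * (v t \<bullet> v t) - \<beta> * (H (x t) (v t) \<bullet> v t) - (g (x t) - g z) \<bullet> v t - g z \<bullet> v t"
    by (simp add: acceleration_eq[OF assms] inner_diff_left inner_diff_right inner_commute)
  also have "v t \<bullet> v t = r \<bullet> r - 2 * t * b * (r \<bullet> g z) + t\<^sup>2 * b\<^sup>2 * G\<^sup>2"
    by (simp add: r_eq g_sq inner_add_left inner_add_right inner_commute power2_eq_square algebra_simps)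
  also have "g z \<bullet> v t = r \<bullet> g z - t * b * G\<^sup>2"
    by (simp add: r_eq g_sq inner_add_right inner_commute)
  also have "- (\<alpha> / t) * (r \<bullet> r - 2 * t * b * (r \<bullet> g z) + t\<^sup>2 * b\<^sup>2 * G\<^sup>2)
      = - (\<alpha> / t) * (r \<bullet> r) + 2 * \<alpha> * b * (r \<bullet> g z) - \<alpha> * t * b\<^sup>2 * G\<^sup>2"
    using assms by (simp add: field_simps power2_eq_square)
  also have "t * b * G\<^sup>2 = t * b\<^sup>2 * G\<^sup>2 + \<alpha> * t * b\<^sup>2 * G\<^sup>2"
  proof -
    have "t * b * G\<^sup>2 * (b * (1 + \<alpha>)) = t * b\<^sup>2 * G\<^sup>2 + \<alpha> * t * b\<^sup>2 * G\<^sup>2"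
      by (simp add: algebra_simps power2_eq_square)
    then show ?thesis
      using alpha_pos by (simp add: b_def)
  qed
  finally show ?thesis
    unfolding b_def[symmetric] G_def[symmetric] r_def[symmetric] by (simp add: algebra_simps)
qed

lemma curvature_terms_le:
  assumes "0 < t" and "t \<le> 1"
  shows "\<beta> * (H (x t) (v t) \<bullet> v t) + (g (x t) - g z) \<bullet> v t
           \<le> (\<beta> + 1) * L * (norm (g z))\<^sup>2 * speed_const\<^sup>2 * t\<^sup>2"
proof -
  define G where "G = norm (g z)"
  have v_le: "norm (v t) \<le> G * speed_const * t"
    using speed_le_linear[of t] assms by (simp add: G_def)
  have "\<beta> * (H (x t) (v t) \<bullet> v t) \<le> \<beta> * L * G\<^sup>2 * speed_const\<^sup>2 * t\<^sup>2"
  proof -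
    have "H (x t) (v t) \<bullet> v t \<le> L * norm (v t) * norm (v t)"
      using norm_cauchy_schwarz[of "H (x t) (v t)" "v t"] mult_right_mono[OF hessian_norm_le norm_ge_zero]
      by (meson order_trans)
    also have "\<dots> \<le> L * (G * speed_const * t) * (G * speed_const * t)"
      using v_le L_nonneg speed_const_ge_1 assms by (intro mult_mono mult_left_mono) (auto simp: G_def)
    finally show ?thesis
      using beta_pos mult_left_mono by (fastforce simp: power2_eq_square mult_ac)
  qed
  moreover have "(g (x t) - g z) \<bullet> v t \<le> L * G\<^sup>2 * speed_const\<^sup>2 * t\<^sup>2"
  proof -
    have "(g (x t) - g z) \<bullet> v t \<le> L * norm (x t - z) * norm (v t)"
      using norm_cauchy_schwarz[of "g (x t) - g z" "v t"]
        mult_right_mono[OF lipschitz_on_normD[OF lipschitz] norm_ge_zero]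
      by (meson UNIV_I order_trans)
    also have "\<dots> \<le> L * (G * speed_const * t\<^sup>2 / 2) * (G * speed_const * t)"
      using dist_initial_le_quadratic[of t] v_le assms L_nonneg speed_const_ge_1
      by (intro mult_mono mult_left_mono) (auto simp: G_def)
    also have "\<dots> = L * G\<^sup>2 * speed_const\<^sup>2 * t\<^sup>2 * (t / 2)"
      by (simp add: power2_eq_square)
    also have "\<dots> \<le> L * G\<^sup>2 * speed_const\<^sup>2 * t\<^sup>2 * 1"
      using assms L_nonneg by (intro mult_left_mono) auto
    finally show ?thesis
      by simp
  qed
  ultimately show ?thesis
    by (simp add: G_def algebra_simps)
qed

(* Since v t is close to -(t / (1 + alpha)) g z, the leading term of v t \<bullet> a t is
   t |g z|^2 / (1 + alpha)^2; the other terms of inner_velocity_acceleration_eq are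
   O(t^2) |g z|^2. *)
lemma inner_velocity_acceleration_ge:
  assumes "0 < t" and "t \<le> 1"
  shows "(norm (g z))\<^sup>2 * t * (1 / (1 + \<alpha>)\<^sup>2 - error_const * t) \<le> v t \<bullet> a t"
proof -
  define b where "b = 1 / (1 + \<alpha>)"
  define G where "G = norm (g z)"
  define r where "r = velocity_deviation t"
  have r_le: "norm r \<le> G * drift_const * t\<^sup>2"
    using velocity_deviation_le[of t] assms by (simp add: r_def G_def)
  have "- (G\<^sup>2 * drift_const * t\<^sup>2) \<le> (2 * \<alpha> * b - 1) * (r \<bullet> g z)"
  proof -
    have "\<bar>2 * \<alpha> * b - 1\<bar> \<le> 1"
      using alpha_pos by (simp add: b_def field_simps)
    then have "\<bar>(2 * \<alpha> * b - 1) * (r \<bullet> g z)\<bar> \<le> 1 * (norm r * G)"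
      unfolding abs_mult G_def using Cauchy_Schwarz_ineq2[of r "g z"] by (intro mult_mono) auto
    also have "\<dots> \<le> G\<^sup>2 * drift_const * t\<^sup>2"
      using mult_right_mono[OF r_le norm_ge_zero[of "g z"]] by (simp add: G_def power2_eq_square mult_ac)
    finally show ?thesis
      by linarith
  qed
  moreover have "(\<alpha> / t) * (r \<bullet> r) \<le> \<alpha> * G\<^sup>2 * drift_const\<^sup>2 * t\<^sup>2"
  proof -
    have "r \<bullet> r \<le> (G * drift_const * t\<^sup>2)\<^sup>2"
      using power_mono[OF r_le norm_ge_zero, of 2] by (simp add: power2_norm_eq_inner)
    then have "(\<alpha> / t) * (r \<bullet> r) \<le> (\<alpha> / t) * (G * drift_const * t\<^sup>2)\<^sup>2"
      using alpha_pos assms(1) by (intro mult_left_mono) auto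
    also have "\<dots> = \<alpha> * G\<^sup>2 * drift_const\<^sup>2 * t\<^sup>2 * t"
      using assms(1) by (simp add: power2_eq_square field_simps)
    also have "\<dots> \<le> \<alpha> * G\<^sup>2 * drift_const\<^sup>2 * t\<^sup>2 * 1"
      using alpha_pos assms by (intro mult_left_mono) auto
    finally show ?thesis
      by simp
  qed
  moreover have "\<beta> * (H (x t) (v t) \<bullet> v t) + (g (x t) - g z) \<bullet> v t
      \<le> (\<beta> + 1) * L * G\<^sup>2 * speed_const\<^sup>2 * t\<^sup>2"
    using curvature_terms_le[OF assms] by (simp add: G_def)
  ultimately have "G\<^sup>2 * t * (b\<^sup>2 - error_const * t) \<le> v t \<bullet> a t"
    unfolding inner_velocity_acceleration_eq[OF assms(1), folded b_def G_def r_def] error_const_def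
    by (simp add: algebra_simps power2_eq_square)
  then show ?thesis
    by (simp add: G_def b_def power_divide)
qed

lemma restart_fun_pos:
  assumes "g z \<noteq> 0" and "0 < t" and "t \<le> t_min"
  shows "0 < restart_fun x \<alpha> lam t"
proof -
  have "0 < (norm (g z))\<^sup>2 * t * (1 / (1 + \<alpha>)\<^sup>2 - error_const * t)"
    using assms error_const_mult_le[of t] alpha_pos by (simp add: field_simps)
  also have "\<dots> \<le> v t \<bullet> a t"
    using inner_velocity_acceleration_ge assms t_min_le_1 by simp
  also have "\<dots> \<le> restart_fun x \<alpha> lam t"
    using restart_fun_eq[OF assms(2)] lam_nonneg alpha_pos assms(2) by simp
  finally show ?thesis .
qed

lemma speed_ge_linear:
  assumes "0 \<le> t" and "t \<le> t_min"
  shows "norm (g z) * t / (2 * (1 + \<alpha>)) \<le> norm (v t)"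
proof -
  have "norm (g z) * t * (drift_const * t) \<le> norm (g z) * t * (1 / (2 * (1 + \<alpha>)))"
    using drift_const_mult_le[OF assms] by (rule mult_left_mono) (use assms(1) in simp)
  then have "norm (velocity_deviation t) \<le> norm (g z) * t / (2 * (1 + \<alpha>))"
    using velocity_deviation_le[of t] assms t_min_le_1 by (simp add: power2_eq_square mult_ac)
  moreover have "norm ((t / (1 + \<alpha>)) *\<^sub>R g z) = 2 * (norm (g z) * t / (2 * (1 + \<alpha>)))"
    using assms(1) alpha_pos by (simp add: field_simps)
  ultimately show ?thesis
    using norm_triangle_ineq4[of "velocity_deviation t" "v t"] by (simp add: velocity_deviation_def)
qed

lemma energy_t_min_le:
  "energy t_min \<le> \<phi> z - \<beta> * \<mu> * (norm (g z))\<^sup>2 * t_min ^ 3 / (12 * (1 + \<alpha>)\<^sup>2)"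
proof -
  define k where "k = \<beta> * \<mu> * (norm (g z))\<^sup>2 / (4 * (1 + \<alpha>)\<^sup>2)"
  have "energy t_min - energy 0 \<le> - k * t_min ^ 3 / 3 - (- k * 0 ^ 3 / 3)"
  proof (rule energy_diff_le[where F' = "\<lambda>r. - k * r\<^sup>2"])
    fix r assume r: "0 < r" "r < t_min"
    show "((\<lambda>r. - k * r ^ 3 / 3) has_real_derivative - k * r\<^sup>2) (at r)"
      by (auto intro!: derivative_eq_intros simp: power2_eq_square)
    have "(norm (g z) * r / (2 * (1 + \<alpha>)))\<^sup>2 \<le> (norm (v r))\<^sup>2"
      using speed_ge_linear[of r] r alpha_pos by (intro power_mono) auto
    also have "(norm (g z) * r / (2 * (1 + \<alpha>)))\<^sup>2 = (norm (g z))\<^sup>2 * r\<^sup>2 / (4 * (1 + \<alpha>)\<^sup>2)"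
      using alpha_pos by (simp add: power2_eq_square field_simps)
    finally have "\<beta> * \<mu> * ((norm (g z))\<^sup>2 * r\<^sup>2 / (4 * (1 + \<alpha>)\<^sup>2)) \<le> \<beta> * \<mu> * (norm (v r))\<^sup>2"
      using beta_pos mu_pos by (intro mult_left_mono) auto
    then show "- \<beta> * \<mu> * (norm (v r))\<^sup>2 \<le> - k * r\<^sup>2"
      by (simp add: k_def)
  qed (use t_min_pos in \<open>auto intro!: continuous_intros\<close>)
  moreover have "k * t_min ^ 3 / 3 = \<beta> * \<mu> * (norm (g z))\<^sup>2 * t_min ^ 3 / (12 * (1 + \<alpha>)\<^sup>2)"
    by (simp add: k_def)
  ultimately show ?thesis
    using energy_0 by simp
qed

lemma phi_gap_contracts:
  assumes "t_min \<le> t"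
  shows "\<phi> (x t) - \<phi> xstar \<le> decay_rate * (\<phi> z - \<phi> xstar)"
proof -
  define c where "c = \<beta> * \<mu>\<^sup>2 * t_min ^ 3 / (6 * (1 + \<alpha>)\<^sup>2)"
  have "\<phi> (x t) \<le> energy t_min"
    using phi_le_energy[of t] energy_antimono[of t_min t] assms t_min_pos by simp
  also have "\<dots> \<le> \<phi> z - \<beta> * \<mu> * (norm (g z))\<^sup>2 * t_min ^ 3 / (12 * (1 + \<alpha>)\<^sup>2)"
    by (rule energy_t_min_le)
  also have "\<dots> \<le> \<phi> z - c * (\<phi> z - \<phi> xstar)"
  proof -
    have "\<beta> * \<mu> * t_min ^ 3 / (12 * (1 + \<alpha>)\<^sup>2) * (2 * \<mu> * (\<phi> z - \<phi> xstar))
        \<le> \<beta> * \<mu> * t_min ^ 3 / (12 * (1 + \<alpha>)\<^sup>2) * (norm (g z))\<^sup>2"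
      using gradient_dominance[of z] beta_pos mu_pos t_min_pos by (intro mult_left_mono) auto
    moreover have "\<beta> * \<mu> * t_min ^ 3 / (12 * (1 + \<alpha>)\<^sup>2) * (2 * \<mu> * (\<phi> z - \<phi> xstar))
        = c * (\<phi> z - \<phi> xstar)"
      by (simp add: c_def power2_eq_square)
    ultimately show ?thesis
      by (simp add: mult_ac)
  qed
  finally have "\<phi> (x t) - \<phi> xstar \<le> (1 - c) * (\<phi> z - \<phi> xstar)"
    by (simp add: algebra_simps)
  also have "\<dots> \<le> decay_rate * (\<phi> z - \<phi> xstar)"
    using minimizer[of z] by (intro mult_right_mono) (auto simp: decay_rate_def c_def)
  finally show ?thesis .
qed

(* The only use of lam \<le> 1 / (2 * alpha): the weight exponent 2 lam alpha is at most 1. *)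
lemma speed_sq_ge_without_restart:
  assumes no_restart: "\<And>s. 0 < s \<Longrightarrow> s \<le> t_max \<Longrightarrow> 0 < restart_fun x \<alpha> lam s"
    and "t_min \<le> t" and "t \<le> t_max"
  shows "(norm (g z))\<^sup>2 * t_min ^ 3 / (4 * (1 + \<alpha>)\<^sup>2 * t) \<le> (norm (v t))\<^sup>2"
proof -
  define p where "p = 2 * lam * \<alpha>"
  have p: "0 \<le> p" "p \<le> 1"
    using lam_nonneg lam_le alpha_pos by (auto simp: p_def field_simps)
  have "0 < t"
    using t_min_pos assms(2) by simp
  have "t_min powr p * (norm (v t_min))\<^sup>2 \<le> t powr p * (norm (v t))\<^sup>2"
  proof (rule DERIV_nonneg_imp_increasing_open[OF assms(2)])
    fix s assume s: "t_min < s" "s < t"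
    then have "0 < s"
      using t_min_pos by simp
    then show "\<exists>y. ((\<lambda>s. s powr p * (norm (v s))\<^sup>2) has_real_derivative y) (at s) \<and> 0 \<le> y"
      using weighted_speed_has_real_derivative no_restart[of s] s assms(3)
      unfolding p_def by (intro exI conjI) (auto intro: less_imp_le)
  next
    show "continuous_on {t_min..t} (\<lambda>s. s powr p * (norm (v s))\<^sup>2)"
      using t_min_pos by (intro continuous_intros continuous_on_subset[OF v_cont]) auto
  qed
  then have "(t_min / t) powr p * (norm (v t_min))\<^sup>2 \<le> (norm (v t))\<^sup>2"
    using \<open>0 < t\<close> t_min_pos by (simp add: powr_divide divide_le_eq mult.commute)
  moreover have "(t_min / t) powr 1 \<le> (t_min / t) powr p"
    using p assms(2) t_min_pos \<open>0 < t\<close> by (intro powr_mono') auto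
  then have "t_min / t \<le> (t_min / t) powr p"
    using t_min_pos \<open>0 < t\<close> by simp
  ultimately have "(t_min / t) * (norm (v t_min))\<^sup>2 \<le> (norm (v t))\<^sup>2"
    by (meson mult_right_mono order_trans zero_le_power2)
  moreover have "(norm (g z) * t_min / (2 * (1 + \<alpha>)))\<^sup>2 \<le> (norm (v t_min))\<^sup>2"
    using speed_ge_linear[of t_min] t_min_pos alpha_pos by (intro power_mono) auto
  ultimately have "(t_min / t) * (norm (g z) * t_min / (2 * (1 + \<alpha>)))\<^sup>2 \<le> (norm (v t))\<^sup>2"
    using \<open>0 < t\<close> t_min_pos by (meson divide_nonneg_nonneg less_imp_le mult_left_mono order_trans)
  moreover have "(t_min / t) * (norm (g z) * t_min / (2 * (1 + \<alpha>)))\<^sup>2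
      = (norm (g z))\<^sup>2 * t_min ^ 3 / (4 * (1 + \<alpha>)\<^sup>2 * t)"
    using \<open>0 < t\<close> alpha_pos by (simp add: field_simps power2_eq_square power3_eq_cube)
  ultimately show ?thesis
    by simp
qed

lemma energy_drop_without_restart:
  assumes no_restart: "\<And>s. 0 < s \<Longrightarrow> s \<le> t_max \<Longrightarrow> 0 < restart_fun x \<alpha> lam s"
  shows "energy t_max \<le> energy t_min - (norm (g z))\<^sup>2 / \<mu>"
proof -
  define k where "k = \<beta> * \<mu> * (norm (g z))\<^sup>2 * t_min ^ 3 / (4 * (1 + \<alpha>)\<^sup>2)"
  have "energy t_max - energy t_min \<le> - k * ln t_max - (- k * ln t_min)"
  proof (rule energy_diff_le[where F' = "\<lambda>r. - k * (1 / r)"])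
    show "continuous_on {t_min..t_max} (\<lambda>r. - k * ln r)"
      using t_min_pos by (intro continuous_intros) auto
    fix r assume r: "t_min < r" "r < t_max"
    then have "0 < r"
      using t_min_pos by simp
    then show "((\<lambda>r. - k * ln r) has_real_derivative - k * (1 / r)) (at r)"
      by (auto intro!: derivative_eq_intros)
    have "\<beta> * \<mu> * ((norm (g z))\<^sup>2 * t_min ^ 3 / (4 * (1 + \<alpha>)\<^sup>2 * r)) \<le> \<beta> * \<mu> * (norm (v r))\<^sup>2"
      using speed_sq_ge_without_restart[OF no_restart] r beta_pos mu_pos by (intro mult_left_mono) auto
    then show "- \<beta> * \<mu> * (norm (v r))\<^sup>2 \<le> - k * (1 / r)"
      by (simp add: k_def)
  qed (use t_min_pos t_min_less_t_max in auto)
  moreover have "k * (ln t_max - ln t_min) = (norm (g z))\<^sup>2 / \<mu>"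
  proof -
    have ln_diff: "ln t_max - ln t_min = 4 * (1 + \<alpha>)\<^sup>2 / (\<beta> * \<mu>\<^sup>2 * t_min ^ 3)"
      using t_min_pos by (simp add: t_max_def ln_mult)
    have "(1 + \<alpha>)\<^sup>2 \<noteq> 0" "t_min ^ 3 \<noteq> 0"
      using alpha_pos t_min_pos by auto
    then show ?thesis
      unfolding ln_diff using beta_pos mu_pos by (simp add: k_def field_simps power2_eq_square[of \<mu>])
  qed
  ultimately show ?thesis
    by (simp add: algebra_simps)
qed

lemma restart_before_t_max:
  assumes "\<phi> xstar < \<phi> z"
  shows "\<exists>t. 0 < t \<and> t \<le> t_max \<and> restart_fun x \<alpha> lam t \<le> 0"
proof (rule ccontr)
  assume "\<not> ?thesis"
  then have "energy t_max \<le> energy t_min - (norm (g z))\<^sup>2 / \<mu>"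
    by (intro energy_drop_without_restart) force
  moreover have "energy t_min \<le> \<phi> z"
    using energy_antimono[of 0 t_min] energy_0 t_min_pos by simp
  moreover have "\<phi> xstar \<le> energy t_max"
    using minimizer[of "x t_max"] phi_le_energy[of t_max] by linarith
  moreover have "2 * (\<phi> z - \<phi> xstar) \<le> (norm (g z))\<^sup>2 / \<mu>"
    using gradient_dominance[of z] mu_pos by (simp add: field_simps)
  ultimately show False
    using assms by (simp add: algebra_simps)
qed

end

section \<open>The restart scheme\<close>

lemma restart_point_0: "restart_point \<phi> xs \<alpha> lam z0 0 = z0"
  by (simp add: restart_point_def)

lemma restart_T_0: "restart_T \<phi> xs \<alpha> lam z0 0 = 0"
  by (simp add: restart_T_def)

lemma restart_point_Suc:
  "restart_point \<phi> xs \<alpha> lam z0 (Suc k) =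
     (let z = restart_point \<phi> xs \<alpha> lam z0 k; \<tau> = restart_time \<phi> xs \<alpha> lam z
      in if \<tau> = \<infinity> then z else xs z (real_of_ereal \<tau>))"
  by (simp add: restart_point_def Let_def split_def)

lemma restart_T_Suc:
  "restart_T \<phi> xs \<alpha> lam z0 (Suc k) =
     restart_T \<phi> xs \<alpha> lam z0 k + restart_time \<phi> xs \<alpha> lam (restart_point \<phi> xs \<alpha> lam z0 k)"
  by (simp add: restart_T_def restart_point_def Let_def split_def)

locale din_avd_restart = din_avd +
  fixes xs :: "'a::euclidean_space \<Rightarrow> real \<Rightarrow> 'a"
  assumes sol: "\<And>z. DIN_sol \<alpha> \<beta> g H z (xs z)"
begin

lemma solution_trajectory:
  obtains v a where "din_trajectory \<phi> g H \<mu> L \<alpha> \<beta> lam xstar z (xs z) v a"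
  using DIN_sol_imp_trajectory[OF sol] .

lemma phi_solution_le_initial: "0 \<le> t \<Longrightarrow> \<phi> (xs z t) \<le> \<phi> z"
  by (rule solution_trajectory[of z]) (rule din_trajectory.phi_le_initial)

lemma restart_time_minimizer: "\<phi> z \<le> \<phi> xstar \<Longrightarrow> restart_time \<phi> xs \<alpha> lam z = \<infinity>"
  using minimizer by (auto simp: restart_time_def intro: order_trans)

lemma restart_time_nonminimizer:
  assumes "\<phi> xstar < \<phi> z"
  obtains T where "restart_time \<phi> xs \<alpha> lam z = ereal T" and "t_min \<le> T" and "T \<le> t_max"
    and "\<phi> (xs z T) - \<phi> xstar \<le> decay_rate * (\<phi> z - \<phi> xstar)"
proof -
  obtain v a where "din_trajectory \<phi> g H \<mu> L \<alpha> \<beta> lam xstar z (xs z) v a"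
    by (rule solution_trajectory)
  then interpret din_trajectory \<phi> g H \<mu> L \<alpha> \<beta> lam xstar z "xs z" v a .
  define S where "S = {t. 0 < t \<and> restart_fun (xs z) \<alpha> lam t \<le> 0}"
  have "\<not> (\<forall>y. \<phi> z \<le> \<phi> y)"
    using assms not_le by blast
  then have "restart_time \<phi> xs \<alpha> lam z = Inf (ereal ` S)"
    unfolding restart_time_def S_def by (rule if_not_P)
  moreover obtain t0 where "t0 \<in> S" and "t0 \<le> t_max"
    using restart_before_t_max[OF assms] by (auto simp: S_def)
  then have "Inf (ereal ` S) \<le> ereal t_max"
    by (meson INF_lower ereal_less_eq(3) order_trans)
  moreover have "g z \<noteq> 0"
  proof
    assume "g z = 0"
    then have "\<mu> * (\<phi> z - \<phi> xstar) \<le> 0"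
      using gradient_dominance[of z] by simp
    then show False
      using assms mu_pos by (simp add: mult_le_0_iff)
  qed
  then have "ereal t_min \<le> Inf (ereal ` S)"
    using restart_fun_pos by (force simp: S_def not_le intro: INF_greatest)
  ultimately obtain T where "restart_time \<phi> xs \<alpha> lam z = ereal T" "t_min \<le> T" "T \<le> t_max"
    by (cases "Inf (ereal ` S)") auto
  moreover have "\<phi> (xs z T) - \<phi> xstar \<le> decay_rate * (\<phi> z - \<phi> xstar)"
    using phi_gap_contracts \<open>t_min \<le> T\<close> .
  ultimately show ?thesis
    using that by blast
qed

lemma restart_T_bounds:
  "restart_T \<phi> xs \<alpha> lam z0 k = \<infinity> \<or>
   (\<exists>r. restart_T \<phi> xs \<alpha> lam z0 k = ereal r \<and> real k * t_min \<le> r \<and> r \<le> real k * t_max)"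
proof (induction k)
  case 0
  show ?case
    by (simp add: restart_T_0)
next
  case (Suc k)
  let ?z = "restart_point \<phi> xs \<alpha> lam z0 k"
  show ?case
  proof (cases "\<phi> ?z \<le> \<phi> xstar")
    case True
    then show ?thesis
      using Suc.IH by (auto simp: restart_T_Suc restart_time_minimizer)
  next
    case False
    then obtain T where "restart_time \<phi> xs \<alpha> lam ?z = ereal T" "t_min \<le> T" "T \<le> t_max"
      using restart_time_nonminimizer[of ?z] by (auto simp: not_le)
    then show ?thesis
      using Suc.IH by (auto simp: restart_T_Suc algebra_simps)
  qed
qed

lemma restart_point_gap_le:
  "\<phi> (restart_point \<phi> xs \<alpha> lam z0 k) - \<phi> xstar \<le> decay_rate ^ k * (\<phi> z0 - \<phi> xstar)"
proof (induction k)
  case 0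
  show ?case
    by (simp add: restart_point_0)
next
  case (Suc k)
  let ?z = "restart_point \<phi> xs \<alpha> lam z0 k"
  show ?case
  proof (cases "\<phi> ?z \<le> \<phi> xstar")
    case True
    moreover have "0 \<le> decay_rate ^ Suc k * (\<phi> z0 - \<phi> xstar)"
      using decay_rate_pos minimizer[of z0] by simp
    ultimately show ?thesis
      by (simp add: restart_point_Suc restart_time_minimizer)
  next
    case False
    then obtain T where "restart_time \<phi> xs \<alpha> lam ?z = ereal T"
      and "\<phi> (xs ?z T) - \<phi> xstar \<le> decay_rate * (\<phi> ?z - \<phi> xstar)"
      using restart_time_nonminimizer[of ?z] by (auto simp: not_le)
    moreover have "decay_rate * (\<phi> ?z - \<phi> xstar) \<le> decay_rate * (decay_rate ^ k * (\<phi> z0 - \<phi> xstar))"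
      using Suc.IH decay_rate_pos by (intro mult_left_mono) auto
    ultimately show ?thesis
      by (simp add: restart_point_Suc)
  qed
qed

lemma restart_T_unbounded: "\<exists>k. ereal t < restart_T \<phi> xs \<alpha> lam z0 k"
proof -
  obtain n where "t < real n * t_min"
    using ex_less_of_nat_mult[OF t_min_pos] by blast
  then have "ereal t < restart_T \<phi> xs \<alpha> lam z0 n"
    using restart_T_bounds[of z0 n] by auto
  then show ?thesis ..
qed

lemma restarted_traj_segment:
  assumes "0 \<le> t"
  obtains k r where "restart_T \<phi> xs \<alpha> lam z0 k = ereal r" and "r \<le> t"
    and "ereal t < restart_T \<phi> xs \<alpha> lam z0 (Suc k)"
    and "restarted_traj \<phi> xs \<alpha> lam z0 t = xs (restart_point \<phi> xs \<alpha> lam z0 k) (t - r)"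
proof -
  define k where "k = (LEAST k. ereal t < restart_T \<phi> xs \<alpha> lam z0 (Suc k))"
  obtain k0 where "ereal t < restart_T \<phi> xs \<alpha> lam z0 k0"
    using restart_T_unbounded by blast
  then obtain j where "ereal t < restart_T \<phi> xs \<alpha> lam z0 (Suc j)"
    using assms by (cases k0) (auto simp: restart_T_0)
  then have after: "ereal t < restart_T \<phi> xs \<alpha> lam z0 (Suc k)"
    unfolding k_def by (rule LeastI)
  have "restart_T \<phi> xs \<alpha> lam z0 k \<le> ereal t"
  proof (cases k)
    case 0
    then show ?thesis
      using assms by (simp add: restart_T_0)
  next
    case (Suc i)
    then have "\<not> ereal t < restart_T \<phi> xs \<alpha> lam z0 (Suc i)"
      unfolding k_def by (intro not_less_Least) (simp add: k_def[symmetric])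
    then show ?thesis
      using Suc by simp
  qed
  then obtain r where "restart_T \<phi> xs \<alpha> lam z0 k = ereal r" "r \<le> t"
    using restart_T_bounds[of z0 k] by auto
  moreover have "restarted_traj \<phi> xs \<alpha> lam z0 t = xs (restart_point \<phi> xs \<alpha> lam z0 k) (t - r)"
    using calculation unfolding restarted_traj_def Let_def k_def[symmetric] by simp
  ultimately show ?thesis
    using after that by blast
qed

lemma restarted_traj_linear_convergence:
  assumes "0 \<le> t"
  shows "\<phi> (restarted_traj \<phi> xs \<alpha> lam z0 t) - \<phi> xstar
           \<le> 1 / decay_rate * exp (- (- ln decay_rate / t_max) * t) * (\<phi> z0 - \<phi> xstar)"
proof -
  obtain k r where T_k: "restart_T \<phi> xs \<alpha> lam z0 k = ereal r" and "r \<le> t"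
    and before: "ereal t < restart_T \<phi> xs \<alpha> lam z0 (Suc k)"
    and traj: "restarted_traj \<phi> xs \<alpha> lam z0 t = xs (restart_point \<phi> xs \<alpha> lam z0 k) (t - r)"
    using restarted_traj_segment[OF assms] .
  let ?z = "restart_point \<phi> xs \<alpha> lam z0 k"
  have phi_traj: "\<phi> (restarted_traj \<phi> xs \<alpha> lam z0 t) \<le> \<phi> ?z"
    unfolding traj using phi_solution_le_initial \<open>r \<le> t\<close> by simp
  have rhs_nonneg: "0 \<le> 1 / decay_rate * exp (- (- ln decay_rate / t_max) * t) * (\<phi> z0 - \<phi> xstar)"
    using decay_rate_pos minimizer[of z0] by simp
  show ?thesis
  proof (cases "\<phi> ?z \<le> \<phi> xstar")
    case True
    then show ?thesis
      using phi_traj rhs_nonneg by linarith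
  next
    case False
    then obtain T where "restart_time \<phi> xs \<alpha> lam ?z = ereal T"
      using restart_time_nonminimizer[of ?z] by (auto simp: not_le)
    then have "restart_T \<phi> xs \<alpha> lam z0 (Suc k) = ereal (r + T)"
      using T_k by (simp add: restart_T_Suc)
    then have "t \<le> (real k + 1) * t_max"
      using before restart_T_bounds[of z0 "Suc k"] by (auto simp: add.commute)
    then have "decay_rate ^ k \<le> 1 / decay_rate * exp (- (- ln decay_rate / t_max) * t)"
      using decay_rate_pos decay_rate_less_1 t_min_pos t_min_less_t_max by (intro power_le_exp_decay) auto
    then have "decay_rate ^ k * (\<phi> z0 - \<phi> xstar)
        \<le> 1 / decay_rate * exp (- (- ln decay_rate / t_max) * t) * (\<phi> z0 - \<phi> xstar)"
      using minimizer[of z0] by (intro mult_right_mono) auto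
    then show ?thesis
      using phi_traj restart_point_gap_le[of z0 k] by linarith
  qed
qed

end

theorem mainTheorem1:
  fixes \<phi> :: "'a::euclidean_space \<Rightarrow> real"
    and g :: "'a \<Rightarrow> 'a"
    and H :: "'a \<Rightarrow> 'a \<Rightarrow>\<^sub>L 'a"
    and xs :: "'a \<Rightarrow> real \<Rightarrow> 'a"
    and \<mu> L \<alpha> \<beta> lam :: real and xstar :: 'a
  assumes grad: "\<And>x. (\<phi> has_derivative (\<lambda>h. g x \<bullet> h)) (at x)"
    and hess: "\<And>x. (g has_derivative blinfun_apply (H x)) (at x)"
    and hess_cont: "continuous_on UNIV H"
    and mu_pos: "\<mu> > 0"
    and strongly_convex: "strongly_convex_on \<mu> UNIV \<phi>"
    and minimizer: "\<And>x. \<phi> xstar \<le> \<phi> x"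
    and lipschitz: "L-lipschitz_on UNIV g"
    and alpha_pos: "\<alpha> > 0" and beta_pos: "\<beta> > 0"
    and lambda_range: "0 \<le> lam" "lam \<le> 1" "lam \<le> 1 / (2 * \<alpha>)"
    and sol: "\<And>z. DIN_sol \<alpha> \<beta> g H z (xs z)"
  shows "\<exists>C \<kappa>. C \<ge> 0 \<and> \<kappa> > 0 \<and>
           (\<forall>z0. (\<forall>t\<ge>0. \<exists>k. ereal t < restart_T \<phi> xs \<alpha> lam z0 k) \<and>
                 (\<forall>t>0. \<phi> (restarted_traj \<phi> xs \<alpha> lam z0 t) - \<phi> xstar
                        \<le> C * exp (- \<kappa> * t) * (\<phi> z0 - \<phi> xstar)))"
proof -
  interpret din_avd_restart \<phi> g H \<mu> L \<alpha> \<beta> lam xstar xs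
    using grad hess mu_pos strongly_convex minimizer lipschitz alpha_pos beta_pos
      lambda_range(1,3) sol
    by unfold_locales
  have "ln decay_rate < 0"
    using decay_rate_pos decay_rate_less_1 by simp
  then have kappa_pos: "0 < - ln decay_rate / t_max"
    using t_min_pos t_min_less_t_max by (simp add: divide_neg_pos)
  show ?thesis
  proof (rule exI[of _ "1 / decay_rate"], rule exI[of _ "- ln decay_rate / t_max"], intro conjI allI impI)
    show "0 \<le> 1 / decay_rate"
      using decay_rate_pos by simp
    show "0 < - ln decay_rate / t_max"
      by (rule kappa_pos)
    show "\<exists>k. ereal t < restart_T \<phi> xs \<alpha> lam z0 k" for z0 t
      by (rule restart_T_unbounded)
    show "\<phi> (restarted_traj \<phi> xs \<alpha> lam z0 t) - \<phi> xstar
        \<le> 1 / decay_rate * exp (- (- ln decay_rate / t_max) * t) * (\<phi> z0 - \<phi> xstar)"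
      if "0 < t" for z0 t
      using that by (intro restarted_traj_linear_convergence) simp
  qed
qed

end
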